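(* Let $\alpha$ be a (jointly continuous) action of a locally compact group $G$ on a locally compact Hausdorff space $M$, and so on $C_\infty(M)$ via $(\alpha_xf)(m)=f(\alpha_x^{-1}(m))$. If $\alpha$ on $C_\infty(M)$ is integrable, then every $\alpha$-orbit in $M$ is closed, and the stability subgroup of each point of $M$ is compact.
   Context: $G$ carries a fixed left Haar measure. Let $\mathcal B$ be the set of $\lambda\in L^\infty(G)$ with compact support and $0\le\lambda\le1$, directed pointwise; for $a\in A=C_\infty(M)$, $p_\lambda(a)=\int\lambda(x)\alpha_x(a)\,dx$. An element $a\in A^+$ is order-integrable if $\sup_{\lambda\in\mathcal B}\|p_\lambda(a)\|<\infty$ (equivalently the increasing net is bounded above in $A''$); $\mathcal M_\alpha$ is the linear span of order-integrable elements, and $\alpha$ is integrable if $\mathcal M_\alpha$ is dense in $A$. *)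

theory Defs
  imports "HOL-Analysis.Analysis"
begin

text \<open>The group G is a type 'g of class topological_group_add (a possibly
non-commutative group, written additively, with continuous operations),
Hausdorff and locally compact.\<close>

definition group_action :: "('g::group_add \<Rightarrow> 'm \<Rightarrow> 'm) \<Rightarrow> bool" where
  "group_action act \<longleftrightarrow> (\<forall>m. act 0 m = m) \<and> (\<forall>g h m. act (g + h) m = act g (act h m))"

definition jointly_continuous :: "('g::topological_space \<Rightarrow> 'm::topological_space \<Rightarrow> 'm) \<Rightarrow> bool" where
  "jointly_continuous act \<longleftrightarrow> continuous_on UNIV (\<lambda>p. act (fst p) (snd p))"

definition left_haar :: "('g::topological_group_add) measure \<Rightarrow> bool" where
  "left_haar \<mu> \<longleftrightarrow>
     sets \<mu> = sets borel \<and>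
     (\<forall>g A. A \<in> sets borel \<longrightarrow> emeasure \<mu> ((\<lambda>x. g + x) ` A) = emeasure \<mu> A) \<and>
     (\<forall>K. compact K \<longrightarrow> emeasure \<mu> K < \<infinity>) \<and>
     (\<forall>U. open U \<and> U \<noteq> {} \<longrightarrow> emeasure \<mu> U > 0) \<and>
     (\<forall>A. A \<in> sets borel \<longrightarrow> emeasure \<mu> A = (INF U\<in>{U. open U \<and> A \<subseteq> U}. emeasure \<mu> U)) \<and>
     (\<forall>U. open U \<longrightarrow> emeasure \<mu> U = (SUP K\<in>{K. compact K \<and> K \<subseteq> U}. emeasure \<mu> K))"

definition Cinf :: "('m::topological_space \<Rightarrow> complex) set" where
  "Cinf = {f. continuous_on UNIV f \<and>
              (\<forall>e>0. \<exists>K. compact K \<and> (\<forall>m. m \<notin> K \<longrightarrow> cmod (f m) < e))}"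

text \<open>The index set \<B>: (representatives of) L^\<infinity> functions with compact
support and values in [0,1].\<close>

definition cutoffs :: "('g::topological_space \<Rightarrow> real) set" where
  "cutoffs = {l. l \<in> borel_measurable borel \<and> (\<forall>x. 0 \<le> l x \<and> l x \<le> 1) \<and>
                 (\<exists>K. compact K \<and> (\<forall>x. x \<notin> K \<longrightarrow> l x = 0))}"

definition alpha_fun :: "('g::group_add \<Rightarrow> 'm \<Rightarrow> 'm) \<Rightarrow> 'g \<Rightarrow> ('m \<Rightarrow> complex) \<Rightarrow> 'm \<Rightarrow> complex" where
  "alpha_fun act x f = (\<lambda>m. f (act (- x) m))"

text \<open>p_\<lambda>(a) = \<integral> \<lambda>(x) \<alpha>_x(a) dx, evaluated pointwise (evaluation at a point is
a continuous linear functional on C_\<infinity>(M), so this is the C_\<infinity>(M)-valued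
integral evaluated at m).\<close>

definition p_lambda :: "'g::group_add measure \<Rightarrow> ('g \<Rightarrow> 'm \<Rightarrow> 'm) \<Rightarrow> ('g \<Rightarrow> real) \<Rightarrow> ('m \<Rightarrow> complex) \<Rightarrow> 'm \<Rightarrow> complex" where
  "p_lambda \<mu> act l a = (\<lambda>m. integral\<^sup>L \<mu> (\<lambda>x. complex_of_real (l x) * alpha_fun act x a m))"

definition order_integrable ::
  "('g::topological_group_add) measure \<Rightarrow> ('g \<Rightarrow> 'm::topological_space \<Rightarrow> 'm) \<Rightarrow> ('m \<Rightarrow> complex) \<Rightarrow> bool" where
  "order_integrable \<mu> act a \<longleftrightarrow>
     a \<in> Cinf \<and> (\<forall>m. Im (a m) = 0 \<and> Re (a m) \<ge> 0) \<and>
     (\<exists>C. \<forall>l\<in>cutoffs. \<forall>m. cmod (p_lambda \<mu> act l a m) \<le> C)"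

definition M_alpha ::
  "('g::topological_group_add) measure \<Rightarrow> ('g \<Rightarrow> 'm::topological_space \<Rightarrow> 'm) \<Rightarrow> ('m \<Rightarrow> complex) set" where
  "M_alpha \<mu> act = {f. \<exists>n (c::nat \<Rightarrow> complex) (a::nat \<Rightarrow> 'm \<Rightarrow> complex).
      (\<forall>i<n. order_integrable \<mu> act (a i)) \<and> f = (\<lambda>m. \<Sum>i<n. c i * a i m)}"

definition integrable_action ::
  "('g::topological_group_add) measure \<Rightarrow> ('g \<Rightarrow> 'm::topological_space \<Rightarrow> 'm) \<Rightarrow> bool" where
  "integrable_action \<mu> act \<longleftrightarrow>
     (\<forall>f\<in>Cinf. \<forall>e>0. \<exists>g\<in>M_alpha \<mu> act. \<forall>m. cmod (f m - g m) \<le> e)"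

end

theory Submission
  imports Defs
begin

(* Density of M_alpha yields an order-integrable b with b(n) > 0, so
   b \<ge> \<delta> > 0 on a neighbourhood U of n, while the p_lambda(b) are uniformly bounded by C.
   By joint continuity there are a neighbourhood B of n and a compact neighbourhood W of 0
   with W B \<subseteq> U. If for some m the return set {g. g m \<in> B} were not relatively compact, it
   would contain arbitrarily many g whose translates g^-1 W^-1 are pairwise disjoint; on their
   union L the integrand of p_L(b)(m) is at least \<delta>, so p_L(b)(m) \<ge> \<delta> \<mu>(L), and \<mu>(L)
   grows without bound by left invariance. So every point has a neighbourhood whose return
   sets are relatively compact, which forces compact stabilisers and closed orbits. *)

lemma Hausdorff_space_euclidean_t2: "Hausdorff_space (euclidean :: 'a::t2_space topology)"
  unfolding Hausdorff_space_def disjnt_def using hausdorff by auto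

lemma locally_compact_space_compact_nhd:
  fixes x :: "'a::t2_space"
  assumes "locally_compact_space (euclidean::'a topology)" "open A" "x \<in> A"
  obtains V K where "open V" "compact K" "x \<in> V" "V \<subseteq> K" "K \<subseteq> A"
proof -
  have "neighbourhood_base_of (compactin euclidean) (euclidean::'a topology)"
    using locally_compact_space_neighbourhood_base Hausdorff_space_euclidean_t2 assms(1) by blast
  then show thesis
    using assms(2,3) that
    unfolding neighbourhood_base_of compactin_euclidean_iff open_openin[symmetric] by meson
qed

lemma Cinf_continuous: "f \<in> Cinf \<Longrightarrow> continuous_on UNIV f"
  unfolding Cinf_def by simp

lemma Cinf_bump:
  fixes n :: "'m::t2_space"
  assumes "locally_compact_space (euclidean::'m topology)"
  obtains f where "f \<in> Cinf" "f n = 1"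
proof -
  obtain V K where VK: "open V" "compact K" "n \<in> V" "V \<subseteq> K"
    using locally_compact_space_compact_nhd[OF assms open_UNIV UNIV_I] by metis
  have "completely_regular_space (euclidean::'m topology)"
    using locally_compact_regular_imp_completely_regular_space[OF assms]
      Hausdorff_space_euclidean_t2 by blast
  moreover have "openin euclidean V" using VK(1) by simp
  ultimately obtain u where u: "continuous_map euclidean euclideanreal u" "u n = 0"
      "u ` (topspace euclidean - V) \<subseteq> {1}"
    using completely_regular_space_alt'[THEN iffD1, rule_format, of _ V n] VK(3) by blast
  define f where "f = (\<lambda>x. complex_of_real (1 - u x))"
  have "continuous_on UNIV f"
    using u(1) unfolding f_def continuous_map_iff_continuous2 by (intro continuous_intros)
  moreover have "f x = 0" if "x \<notin> K" for x
    using that VK(4) u(3) unfolding f_def by auto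
  ultimately have "f \<in> Cinf"
    unfolding Cinf_def using VK(2) by force
  moreover have "f n = 1" using u(2) unfolding f_def by simp
  ultimately show thesis using that by blast
qed

lemma integrable_action_order_integrable_pos:
  fixes act :: "'g::topological_group_add \<Rightarrow> 'm::t2_space \<Rightarrow> 'm"
  assumes "locally_compact_space (euclidean::'m topology)" "integrable_action \<mu> act"
  obtains b where "order_integrable \<mu> act b" "Re (b n) > 0"
proof -
  obtain f where f: "f \<in> Cinf" "f n = 1" using Cinf_bump[OF assms(1)] by metis
  moreover have "(1/2 :: real) > 0" by simp
  ultimately obtain g where g: "g \<in> M_alpha \<mu> act" "\<forall>m. cmod (f m - g m) \<le> 1/2"
    using assms(2) unfolding integrable_action_def by blast
  then obtain N :: nat and c :: "nat \<Rightarrow> complex" and a :: "nat \<Rightarrow> 'm \<Rightarrow> complex"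
    where oi: "\<forall>i<N. order_integrable \<mu> act (a i)"
      and g_eq: "g = (\<lambda>m. \<Sum>i<N. c i * a i m)"
    unfolding M_alpha_def by blast
  have "g n \<noteq> 0"
  proof
    assume "g n = 0"
    then show False using g(2)[rule_format, of n] f(2) by simp
  qed
  then obtain i where i: "i < N" "a i n \<noteq> 0"
    unfolding g_eq by (auto elim: sum.not_neutral_contains_not_neutral)
  have "Im (a i n) = 0" "Re (a i n) \<ge> 0"
    using oi i(1) unfolding order_integrable_def by blast+
  with i(2) have "Re (a i n) > 0" by (simp add: complex_eq_iff less_le)
  then show thesis using that oi i(1) by blast
qed

lemma jointly_continuous_compose:
  assumes "jointly_continuous act" "continuous_on S f" "continuous_on S g"
  shows "continuous_on S (\<lambda>x. act (f x) (g x))"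
proof -
  have "continuous_on S (\<lambda>x. (f x, g x))" using assms(2,3) by (intro continuous_intros)
  then show ?thesis
    using continuous_on_compose2[of UNIV "\<lambda>p. act (fst p) (snd p)"] assms(1)
    unfolding jointly_continuous_def by fastforce
qed

lemma jointly_continuous_compact_nhd:
  fixes act :: "'g::{zero,t2_space} \<Rightarrow> 'm::topological_space \<Rightarrow> 'm"
  assumes "locally_compact_space (euclidean::'g topology)" "jointly_continuous act"
    and "open U" "act 0 n \<in> U"
  obtains B V W where "open B" "n \<in> B" "open V" "0 \<in> V" "V \<subseteq> W" "compact W"
    "\<And>w y. w \<in> W \<Longrightarrow> y \<in> B \<Longrightarrow> act w y \<in> U"
proof -
  have "open ((\<lambda>p. act (fst p) (snd p)) -` U)"
    using assms(3,2) unfolding jointly_continuous_def by (rule open_vimage)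
  moreover have "(0, n) \<in> (\<lambda>p. act (fst p) (snd p)) -` U" using assms(4) by simp
  ultimately obtain A B where AB: "open A" "open B" "(0, n) \<in> A \<times> B"
      "A \<times> B \<subseteq> (\<lambda>p. act (fst p) (snd p)) -` U"
    by (rule open_prod_elim)
  have "0 \<in> A" using AB(3) by simp
  with assms(1) AB(1) obtain V W where VW: "open V" "compact W" "0 \<in> V" "V \<subseteq> W" "W \<subseteq> A"
    by (rule locally_compact_space_compact_nhd)
  have "act w y \<in> U" if "w \<in> W" "y \<in> B" for w y
  proof -
    have "(w, y) \<in> A \<times> B" using that VW(5) by blast
    then show ?thesis using AB(4) by auto
  qed
  with that[OF AB(2)] AB(3) VW(1-4) show thesis by simp
qed

lemma left_haar_sets: "left_haar \<mu> \<Longrightarrow> sets \<mu> = sets borel"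
  unfolding left_haar_def by (rule conjunct1)

lemma left_haar_translate:
  "left_haar \<mu> \<Longrightarrow> A \<in> sets borel \<Longrightarrow> emeasure \<mu> ((\<lambda>x. g + x) ` A) = emeasure \<mu> A"
  unfolding left_haar_def by blast

lemma left_haar_compact_finite: "left_haar \<mu> \<Longrightarrow> compact K \<Longrightarrow> emeasure \<mu> K < \<infinity>"
  unfolding left_haar_def by blast

lemma left_haar_open_pos: "left_haar \<mu> \<Longrightarrow> open U \<Longrightarrow> U \<noteq> {} \<Longrightarrow> emeasure \<mu> U > 0"
  unfolding left_haar_def by blast

lemma left_haar_compact_nhd_pos:
  fixes \<mu> :: "'g::{topological_group_add,t2_space} measure"
  assumes "left_haar \<mu>" "compact K" "open V" "V \<noteq> {}" "V \<subseteq> K"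
  shows "measure \<mu> K > 0"
proof -
  have "0 < emeasure \<mu> V" using assms(1,3,4) by (rule left_haar_open_pos)
  also have "\<dots> \<le> emeasure \<mu> K"
    using assms(1,2,5) by (intro emeasure_mono) (simp_all add: left_haar_sets compact_imp_closed)
  finally show ?thesis
    using left_haar_compact_finite[OF assms(1,2)] by (simp add: measure_def enn2real_positive_iff)
qed

lemma left_haar_measure_disjoint_translates:
  fixes \<mu> :: "'g::{topological_group_add,t2_space} measure"
  assumes "left_haar \<mu>" "compact S" "finite F" "disjoint_family_on (\<lambda>g. (\<lambda>x. t g + x) ` S) F"
  shows "measure \<mu> (\<Union>g\<in>F. (\<lambda>x. t g + x) ` S) = real (card F) * measure \<mu> S"
proof -
  have translate_compact: "compact ((\<lambda>x. c + x) ` S)" for c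
    using assms(2) by (intro compact_continuous_image continuous_intros)
  have "emeasure \<mu> (\<Union>g\<in>F. (\<lambda>x. t g + x) ` S) = (\<Sum>g\<in>F. emeasure \<mu> ((\<lambda>x. t g + x) ` S))"
    using assms(1,3,4) translate_compact
    by (intro sum_emeasure[symmetric]) (auto simp: left_haar_sets compact_imp_closed)
  also have "\<dots> = of_nat (card F) * emeasure \<mu> S"
    using assms(1,2) by (simp add: left_haar_translate compact_imp_closed)
  finally show ?thesis by (simp add: measure_def enn2real_mult)
qed

lemma indicator_compact_in_cutoffs:
  "compact (L :: 'g::t2_space set) \<Longrightarrow> indicator L \<in> cutoffs"
  unfolding cutoffs_def by (auto simp: indicator_def compact_imp_closed)

lemma greedy_disjoint_family_on:
  assumes "\<And>F. finite F \<Longrightarrow> F \<subseteq> T \<Longrightarrow> \<exists>h\<in>T. h \<notin> F \<and> (\<forall>g\<in>F. A h \<inter> A g = {})"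
  shows "\<exists>F. finite F \<and> card F = N \<and> F \<subseteq> T \<and> disjoint_family_on A F"
proof (induction N)
  case 0
  show ?case by (intro exI[of _ "{}"]) (simp add: disjoint_family_on_def)
next
  case (Suc N)
  then obtain F where F: "finite F" "card F = N" "F \<subseteq> T" "disjoint_family_on A F" by blast
  with assms obtain h where "h \<in> T" "h \<notin> F" "\<forall>g\<in>F. A h \<inter> A g = {}" by blast
  with F show ?case
    by (intro exI[of _ "insert h F"]) (auto simp: disjoint_family_on_insert)
qed

lemma not_relatively_compact_disjoint_translates:
  fixes S T :: "'g::{topological_group_add,t2_space} set"
  assumes "compact S" "\<nexists>K. compact K \<and> T \<subseteq> K"
  obtains F where "finite F" "card F = N" "F \<subseteq> T"
    "disjoint_family_on (\<lambda>g. (\<lambda>x. -g + x) ` S) F"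
proof -
  (* the translates -g + S and -h + S meet only if h \<in> E + g *)
  define E where "E = (\<lambda>p. snd p - fst p) ` (S \<times> S)"
  have "compact E"
    unfolding E_def using assms(1) by (intro compact_continuous_image compact_Times continuous_intros)
  have "\<exists>h\<in>T. h \<notin> F \<and> (\<forall>g\<in>F. (\<lambda>x. -h + x) ` S \<inter> (\<lambda>x. -g + x) ` S = {})"
    if "finite F" "F \<subseteq> T" for F
  proof -
    define K where "K = F \<union> (\<lambda>p. fst p + snd p) ` (E \<times> F)"
    have "compact K"
      unfolding K_def using \<open>compact E\<close> \<open>finite F\<close>
      by (intro compact_Un finite_imp_compact[OF \<open>finite F\<close>] compact_continuous_image
          compact_Times continuous_intros)
    with assms(2) obtain h where h: "h \<in> T" "h \<notin> K" by blast
    have "(\<lambda>x. -h + x) ` S \<inter> (\<lambda>x. -g + x) ` S = {}" if "g \<in> F" for g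
    proof (rule ccontr)
      assume "(\<lambda>x. -h + x) ` S \<inter> (\<lambda>x. -g + x) ` S \<noteq> {}"
      then obtain x where "x \<in> (\<lambda>x. -g + x) ` S" "x \<in> (\<lambda>x. -h + x) ` S" by blast
      then obtain s1 s2 where s: "s1 \<in> S" "s2 \<in> S" "x = -g + s1" "x = -h + s2" by blast
      have "s2 = h + x" using s(4) by simp
      also have "\<dots> = (h - g) + s1" using s(3) by (simp add: add.assoc[symmetric])
      finally have "h = (s2 - s1) + g" by (simp add: diff_eq_eq)
      moreover have "s2 - s1 \<in> E" unfolding E_def using s(1,2) by force
      ultimately have "h \<in> K" unfolding K_def using that by force
      with h(2) show False by blast
    qed
    with h show ?thesis unfolding K_def by blast
  qed
  then show thesis
    using greedy_disjoint_family_on[of T "\<lambda>g. (\<lambda>x. -g + x) ` S" N] that by blast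
qed

lemma p_lambda_indicator_lower_bound:
  fixes \<mu> :: "'g::{topological_group_add,t2_space} measure"
  assumes "left_haar \<mu>" "jointly_continuous act" "a \<in> Cinf" "\<forall>y. Im (a y) = 0"
    and "compact L" "\<And>x. x \<in> L \<Longrightarrow> \<delta> \<le> Re (a (act (-x) m))"
  shows "\<delta> * measure \<mu> L \<le> cmod (p_lambda \<mu> act (indicator L) a m)"
proof -
  define \<rho> where "\<rho> = (\<lambda>x. Re (a (act (-x) m)))"
  define \<psi> where "\<psi> = (\<lambda>x. indicator L x * \<rho> x)"
  have L_sets: "L \<in> sets \<mu>"
    using assms(1,5) by (simp add: left_haar_sets compact_imp_closed)
  have L_finite: "emeasure \<mu> L < \<infinity>"
    using assms(1,5) by (rule left_haar_compact_finite)
  have "continuous_on UNIV (\<lambda>x. act (-x) m)"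
    by (rule jointly_continuous_compose[OF assms(2)]; intro continuous_intros)
  with Cinf_continuous[OF assms(3)] have "continuous_on UNIV (\<lambda>x. a (act (-x) m))"
    by (rule continuous_on_compose2) simp
  then have \<rho>_cont: "continuous_on UNIV \<rho>"
    unfolding \<rho>_def by (rule continuous_on_Re)
  then have "bounded (\<rho> ` L)"
    using continuous_on_subset compact_continuous_image assms(5) compact_imp_bounded by blast
  then obtain B where B: "\<And>x. x \<in> L \<Longrightarrow> norm (\<rho> x) \<le> B"
    unfolding bounded_iff by blast
  have "\<psi> \<in> borel_measurable borel"
    unfolding \<psi>_def using L_sets \<rho>_cont left_haar_sets[OF assms(1)]
    by (intro borel_measurable_times borel_measurable_indicator borel_measurable_continuous_onI)
       simp_all
  then have \<psi>_meas: "\<psi> \<in> borel_measurable \<mu>"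
    using measurable_cong_sets[OF left_haar_sets[OF assms(1)], of "borel :: real measure" borel]
    by simp
  have "integrable \<mu> (\<lambda>x. B * indicator L x)"
    using integrable_real_indicator[OF L_sets L_finite] by simp
  then have \<psi>_int: "integrable \<mu> \<psi>"
  proof (rule Bochner_Integration.integrable_bound[OF _ \<psi>_meas AE_I2])
    show "norm (\<psi> x) \<le> norm (B * indicator L x)" for x
      using B[of x] unfolding \<psi>_def by (cases "x \<in> L") auto
  qed
  have "\<delta> * measure \<mu> L = integral\<^sup>L \<mu> (\<lambda>x. \<delta> * indicator L x)"
    using L_sets by simp
  also have "\<dots> \<le> integral\<^sup>L \<mu> \<psi>"
  proof (rule integral_mono[OF _ \<psi>_int])
    show "integrable \<mu> (\<lambda>x. \<delta> * indicator L x)"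
      using integrable_real_indicator[OF L_sets L_finite] by simp
    show "\<delta> * indicator L x \<le> \<psi> x" for x
      using assms(6)[of x] unfolding \<psi>_def \<rho>_def by (cases "x \<in> L") auto
  qed
  also have "\<dots> \<le> cmod (complex_of_real (integral\<^sup>L \<mu> \<psi>))" by simp
  also have "complex_of_real (integral\<^sup>L \<mu> \<psi>) = p_lambda \<mu> act (indicator L) a m"
    unfolding p_lambda_def alpha_fun_def integral_complex_of_real[symmetric]
    using assms(4) by (intro Bochner_Integration.integral_cong) (simp_all add: \<psi>_def \<rho>_def complex_eq_iff)
  finally show ?thesis .
qed

lemma bounded_p_lambda_imp_relatively_compact:
  fixes \<mu> :: "'g::{topological_group_add,t2_space} measure"
  assumes "left_haar \<mu>" "jointly_continuous act" "a \<in> Cinf" "\<forall>y. Im (a y) = 0"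
    and "\<forall>l\<in>cutoffs. cmod (p_lambda \<mu> act l a m) \<le> C"
    and "compact S" "measure \<mu> S > 0" "\<delta> > 0"
    and "\<And>g x. g \<in> T \<Longrightarrow> x \<in> (\<lambda>s. -g + s) ` S \<Longrightarrow> \<delta> \<le> Re (a (act (-x) m))"
  shows "\<exists>K. compact K \<and> T \<subseteq> K"
proof (rule ccontr)
  assume "\<nexists>K. compact K \<and> T \<subseteq> K"
  define N where "N = nat \<lceil>C / (\<delta> * measure \<mu> S)\<rceil> + 1"
  obtain F where F: "finite F" "card F = N" "F \<subseteq> T"
      "disjoint_family_on (\<lambda>g. (\<lambda>s. -g + s) ` S) F"
    using not_relatively_compact_disjoint_translates[OF assms(6) \<open>\<nexists>K. _\<close>] by metis
  define L where "L = (\<Union>g\<in>F. (\<lambda>s. -g + s) ` S)"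
  have "compact L"
    unfolding L_def using F(1) assms(6) by (intro compact_UN compact_continuous_image continuous_intros)
  have "real N * (\<delta> * measure \<mu> S) = \<delta> * measure \<mu> L"
    unfolding L_def using left_haar_measure_disjoint_translates[OF assms(1,6) F(1,4)] F(2) by simp
  also have "\<dots> \<le> cmod (p_lambda \<mu> act (indicator L) a m)"
    using \<open>compact L\<close> F(3) assms(9)
    by (intro p_lambda_indicator_lower_bound[OF assms(1-4)]) (auto simp: L_def)
  also have "\<dots> \<le> C"
    using assms(5) indicator_compact_in_cutoffs[OF \<open>compact L\<close>] by blast
  also have "C < real N * (\<delta> * measure \<mu> S)"
  proof -
    have "\<delta> * measure \<mu> S > 0" using assms(7,8) by simp
    moreover have "C / (\<delta> * measure \<mu> S) \<le> real (nat \<lceil>C / (\<delta> * measure \<mu> S)\<rceil>)"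
      by (rule real_nat_ceiling_ge)
    ultimately show ?thesis unfolding N_def by (simp add: pos_divide_le_eq distrib_right)
  qed
  finally show False by simp
qed

lemma integrable_action_relatively_compact_return_sets:
  fixes \<mu> :: "'g::{topological_group_add,t2_space} measure"
    and act :: "'g \<Rightarrow> 'm::t2_space \<Rightarrow> 'm"
  assumes "locally_compact_space (euclidean :: 'g topology)"
    and "locally_compact_space (euclidean :: 'm topology)"
    and "left_haar \<mu>" "group_action act" "jointly_continuous act" "integrable_action \<mu> act"
  obtains B where "open B" "n \<in> B" "\<And>m. \<exists>K. compact K \<and> {g. act g m \<in> B} \<subseteq> K"
proof -
  obtain b where "order_integrable \<mu> act b" and b_pos: "Re (b n) > 0"
    using integrable_action_order_integrable_pos[OF assms(2,6)] by metis
  then obtain C where b: "b \<in> Cinf" "\<forall>y. Im (b y) = 0"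
      "\<forall>l\<in>cutoffs. \<forall>m. cmod (p_lambda \<mu> act l b m) \<le> C"
    unfolding order_integrable_def by blast
  define \<delta> where "\<delta> = Re (b n) / 2"
  define U where "U = {y. \<delta> < Re (b y)}"
  have "open U"
    using Cinf_continuous[OF b(1)] unfolding U_def
    by (intro open_Collect_less continuous_intros continuous_on_Re)
  moreover have "act 0 n \<in> U"
    using assms(4) b_pos unfolding group_action_def U_def \<delta>_def by simp
  ultimately obtain B V W where BVW: "open B" "n \<in> B" "open V" "0 \<in> V" "V \<subseteq> W" "compact W"
      "\<And>w y. w \<in> W \<Longrightarrow> y \<in> B \<Longrightarrow> act w y \<in> U"
    using jointly_continuous_compact_nhd[OF assms(1,5)] by metis
  have S_compact: "compact (uminus ` W)"
    using BVW(6) by (intro compact_continuous_image continuous_intros)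
  have S_pos: "measure \<mu> (uminus ` W) > 0"
  proof (rule left_haar_compact_nhd_pos[OF assms(3) S_compact])
    show "open (uminus -` V)" using BVW(3) by (intro open_vimage continuous_intros)
    show "uminus -` V \<noteq> {}" using BVW(4) by (metis minus_zero vimageI2 empty_iff)
    show "uminus -` V \<subseteq> uminus ` W" using BVW(5) by (force intro: image_eqI[of _ _ "- _"])
  qed
  have return_bound: "\<delta> \<le> Re (b (act (-x) m))"
    if g: "act g m \<in> B" and x: "x \<in> (\<lambda>s. -g + s) ` uminus ` W" for g x m
  proof -
    obtain w where "w \<in> W" "-x = w + g" using x by (auto simp: minus_add)
    then have "act (-x) m = act w (act g m)" using assms(4) unfolding group_action_def by simp
    then show ?thesis using BVW(7)[OF \<open>w \<in> W\<close> g] unfolding U_def by simp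
  qed
  have \<delta>_pos: "\<delta> > 0" using b_pos unfolding \<delta>_def by simp
  have "\<exists>K. compact K \<and> {g. act g m \<in> B} \<subseteq> K" for m
  proof (rule bounded_p_lambda_imp_relatively_compact[OF assms(3,5) b(1,2) _ S_compact S_pos \<delta>_pos])
    show "\<forall>l\<in>cutoffs. cmod (p_lambda \<mu> act l b m) \<le> C" using b(3) by blast
    show "\<delta> \<le> Re (b (act (-x) m))"
      if "g \<in> {g. act g m \<in> B}" "x \<in> (\<lambda>s. -g + s) ` uminus ` W" for g x
      using return_bound that by blast
  qed
  then show thesis by (rule that[OF BVW(1,2)])
qed

lemma closure_range_mem_image_compact:
  fixes f :: "'a::topological_space \<Rightarrow> 'b::t2_space"
  assumes "continuous_on UNIV f" "n \<in> closure (range f)"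
    and "open B" "n \<in> B" "compact K" "f -` B \<subseteq> K"
  shows "n \<in> f ` K"
proof -
  have "closed (f ` K)"
    using continuous_on_subset[OF assms(1) subset_UNIV] assms(5)
    by (intro compact_imp_closed compact_continuous_image)
  have "n \<in> closure (B \<inter> range f)"
    using open_Int_closure_subset[OF assms(3)] assms(2,4) by blast
  also have "\<dots> \<subseteq> closure (f ` K)"
    using assms(6) by (intro closure_mono) blast
  finally show ?thesis using \<open>closed (f ` K)\<close> by simp
qed

theorem proposition1p17:
  fixes \<mu> :: "('g::{topological_group_add, t2_space}) measure"
    and act :: "'g \<Rightarrow> 'm::t2_space \<Rightarrow> 'm"
  assumes "locally_compact_space (euclidean :: 'g topology)"
    and "locally_compact_space (euclidean :: 'm topology)"
    and "left_haar \<mu>"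
    and "group_action act"
    and "jointly_continuous act"
    and "integrable_action \<mu> act"
  shows "\<forall>m. closed (range (\<lambda>g. act g m)) \<and> compact {g. act g m = m}"
proof (intro allI conjI)
  fix m
  have orbit_map: "continuous_on UNIV (\<lambda>g. act g m)"
    by (rule jointly_continuous_compose[OF assms(5)]; intro continuous_intros)
  have return_set: "\<exists>B K. open B \<and> n \<in> B \<and> compact K \<and> {g. act g m \<in> B} \<subseteq> K" for n
    by (rule integrable_action_relatively_compact_return_sets[OF assms, of n]) blast
  show "closed (range (\<lambda>g. act g m))"
  proof (rule closure_subset_eq[THEN iffD1], rule subsetI)
    fix n assume "n \<in> closure (range (\<lambda>g. act g m))"
    moreover obtain B K where "open B" "n \<in> B" "compact K" "{g. act g m \<in> B} \<subseteq> K"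
      using return_set by blast
    ultimately show "n \<in> range (\<lambda>g. act g m)"
      using closure_range_mem_image_compact[OF orbit_map] by blast
  qed
  obtain B K where "m \<in> B" "compact K" "{g. act g m \<in> B} \<subseteq> K"
    using return_set by blast
  then have "{g. act g m = m} = K \<inter> {g. act g m = m}" by auto
  moreover have "closed {g. act g m = m}"
    using orbit_map by (intro closed_Collect_eq continuous_intros)
  ultimately show "compact {g. act g m = m}"
    using \<open>compact K\<close> by (metis compact_Int_closed)
qed

end
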